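(* Let $(X,d)$ be a compact metric space and let $f_{1,\infty}=(f_n)_{n=1}^\infty$ be a sequence of continuous maps $f_n:X\to X$ converging uniformly to a map $f:X\to X$. Then for every $N\in\mathbb{N}$, $(X,f_{1,\infty})$ is DC2' if and only if its $N$-th iterate $(X,f_{1,\infty}^{[N]})$ is DC2'.
   Context: For $i,n\in\mathbb{N}$ write $f_i^n=f_{i+n-1}\circ\cdots\circ f_i$ and $f_i^0=\mathrm{id}_X$. The $N$-th iterate is $f_{1,\infty}^{[N]}=(f_{N(n-1)+1}^N)_{n=1}^\infty$, whose $n$-fold composition from index $1$ is $f_1^{Nn}$. For a non-autonomous system $g_{1,\infty}$ with compositions $g_1^i$, points $x,y\in X$ and $t>0$, set $\Phi(g_{1,\infty},x,y,t)=\liminf_{n\to\infty}\frac1n\#\{0\le i\le n-1: d(g_1^i(x),g_1^i(y))<t\}$ and $\Phi^*(g_{1,\infty},x,y,t)=\limsup_{n\to\infty}\frac1n\#\{0\le i\le n-1: d(g_1^i(x),g_1^i(y))<t\}$. The system is DC2' if there is an uncountable $S\subseteq X$ such that for all distinct $x,y\in S$: $\Phi(g_{1,\infty},x,y,\varepsilon)=0$ for some $\varepsilon>0$ and $\Phi^*(g_{1,\infty},x,y,t)>0$ for all $t>0$. *)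

theory Defs
  imports "HOL-Analysis.Analysis"
begin

text \<open>Non-autonomous systems are sequences indexed from 1: the map f_n is f n (f 0 is unused).\<close>

fun comp_from :: "(nat \<Rightarrow> 'a \<Rightarrow> 'a) \<Rightarrow> nat \<Rightarrow> nat \<Rightarrow> 'a \<Rightarrow> 'a" where
  "comp_from f i 0 = id"
| "comp_from f i (Suc n) = f (i + n) \<circ> comp_from f i n"

text \<open>N-th iterate: (f^{[N]})_n = f_{N(n-1)+1}^N for n >= 1 (index 0 unused, set to id).\<close>
definition nth_iterate :: "nat \<Rightarrow> (nat \<Rightarrow> 'a \<Rightarrow> 'a) \<Rightarrow> nat \<Rightarrow> 'a \<Rightarrow> 'a" where
  "nth_iterate N f n = (if n = 0 then id else comp_from f (N * (n - 1) + 1) N)"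

definition close_count :: "(nat \<Rightarrow> 'a::metric_space \<Rightarrow> 'a) \<Rightarrow> 'a \<Rightarrow> 'a \<Rightarrow> real \<Rightarrow> nat \<Rightarrow> nat" where
  "close_count g x y t n = card {i. i < n \<and> dist (comp_from g 1 i x) (comp_from g 1 i y) < t}"

definition Phi_lower :: "(nat \<Rightarrow> 'a::metric_space \<Rightarrow> 'a) \<Rightarrow> 'a \<Rightarrow> 'a \<Rightarrow> real \<Rightarrow> ereal" where
  "Phi_lower g x y t = liminf (\<lambda>n. ereal (real (close_count g x y t n) / real n))"

definition Phi_upper :: "(nat \<Rightarrow> 'a::metric_space \<Rightarrow> 'a) \<Rightarrow> 'a \<Rightarrow> 'a \<Rightarrow> real \<Rightarrow> ereal" where
  "Phi_upper g x y t = limsup (\<lambda>n. ereal (real (close_count g x y t n) / real n))"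

definition DC2' :: "(nat \<Rightarrow> 'a::metric_space \<Rightarrow> 'a) \<Rightarrow> bool" where
  "DC2' g \<longleftrightarrow> (\<exists>S. uncountable S \<and>
     (\<forall>x\<in>S. \<forall>y\<in>S. x \<noteq> y \<longrightarrow>
        (\<exists>\<epsilon>>0. Phi_lower g x y \<epsilon> = 0) \<and> (\<forall>t>0. Phi_upper g x y t > 0)))"

end

theory Submission
  imports Defs
begin

text \<open>
  Uniform convergence of continuous maps on a compact space makes the family of all \<open>f n\<close>
  uniformly equicontinuous, hence so is the family of all compositions of at most \<open>N\<close>
  consecutive maps. For the distance sequence \<open>a i = d(f_1^i x, f_1^i y)\<close> of a pair this
  means: for every \<open>e > 0\<close> there is \<open>\<delta> > 0\<close> such that \<open>a i < \<delta>\<close> forces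
  \<open>a (i + k) < e\<close> for all \<open>k \<le> N\<close>. The \<open>N\<close>-th iterate only sees the subsequence
  \<open>a (N * j)\<close>. Closeness at a multiple of \<open>N\<close> spreads over the following block of
  length \<open>N\<close>, and closeness at any time reaches the next multiple of \<open>N\<close>; so the
  proportions of close times of the two systems bound each other up to a constant factor,
  after a change of threshold. Such bounds carry lower density zero and positive upper density
  in both directions, pair by pair.
\<close>

section \<open>Uniform equicontinuity\<close>

definition uniformly_equicontinuous :: "('a::metric_space \<Rightarrow> 'b::metric_space) set \<Rightarrow> bool" where
  "uniformly_equicontinuous F \<longleftrightarrow>
     (\<forall>e>0. \<exists>d>0. \<forall>f\<in>F. \<forall>x y. dist x y < d \<longrightarrow> dist (f x) (f y) < e)"

lemma uniformly_equicontinuousI: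
  assumes "\<And>e. 0 < e \<Longrightarrow> \<exists>d>0. \<forall>f\<in>F. \<forall>x y. dist x y < d \<longrightarrow> dist (f x) (f y) < e"
  shows "uniformly_equicontinuous F"
  using assms unfolding uniformly_equicontinuous_def by simp

lemma uniformly_equicontinuousE:
  assumes "uniformly_equicontinuous F" and "0 < e"
  obtains d where "0 < d" "\<And>f x y. f \<in> F \<Longrightarrow> dist x y < d \<Longrightarrow> dist (f x) (f y) < e"
  using assms unfolding uniformly_equicontinuous_def by metis

lemma uniformly_equicontinuous_subset:
  assumes "F \<subseteq> G" and "uniformly_equicontinuous G"
  shows "uniformly_equicontinuous F"
proof (rule uniformly_equicontinuousI)
  fix e :: real assume "0 < e"
  obtain d where "0 < d" "\<And>f x y. f \<in> G \<Longrightarrow> dist x y < d \<Longrightarrow> dist (f x) (f y) < e"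
    using uniformly_equicontinuousE[OF assms(2) \<open>0 < e\<close>] by blast
  then show "\<exists>d>0. \<forall>f\<in>F. \<forall>x y. dist x y < d \<longrightarrow> dist (f x) (f y) < e"
    using assms(1) by blast
qed

lemma uniformly_equicontinuous_Un:
  assumes "uniformly_equicontinuous F" and "uniformly_equicontinuous G"
  shows "uniformly_equicontinuous (F \<union> G)"
proof (rule uniformly_equicontinuousI)
  fix e :: real assume "0 < e"
  obtain d1 where "0 < d1" and d1: "\<And>f x y. f \<in> F \<Longrightarrow> dist x y < d1 \<Longrightarrow> dist (f x) (f y) < e"
    using uniformly_equicontinuousE[OF assms(1) \<open>0 < e\<close>] by blast
  obtain d2 where "0 < d2" and d2: "\<And>f x y. f \<in> G \<Longrightarrow> dist x y < d2 \<Longrightarrow> dist (f x) (f y) < e"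
    using uniformly_equicontinuousE[OF assms(2) \<open>0 < e\<close>] by blast
  have "\<forall>f\<in>F \<union> G. \<forall>x y. dist x y < min d1 d2 \<longrightarrow> dist (f x) (f y) < e"
    using d1 d2 by auto
  then show "\<exists>d>0. \<forall>f\<in>F \<union> G. \<forall>x y. dist x y < d \<longrightarrow> dist (f x) (f y) < e"
    using \<open>0 < d1\<close> \<open>0 < d2\<close> by (intro exI[of _ "min d1 d2"]) simp
qed

lemma uniformly_equicontinuous_singleton_iff:
  "uniformly_equicontinuous {f} \<longleftrightarrow> uniformly_continuous_on UNIV f"
  unfolding uniformly_equicontinuous_def uniformly_continuous_on_def by (simp add: dist_commute)

lemma uniformly_equicontinuous_id: "uniformly_equicontinuous {id}"
  unfolding uniformly_equicontinuous_singleton_iff id_def by (rule uniformly_continuous_on_id)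

lemma uniformly_equicontinuous_finite:
  assumes "finite F" and "\<And>f. f \<in> F \<Longrightarrow> uniformly_continuous_on UNIV f"
  shows "uniformly_equicontinuous F"
  using assms
proof (induction F rule: finite_induct)
  case empty
  show ?case by (rule uniformly_equicontinuousI) (intro exI[of _ 1], simp)
next
  case (insert f F)
  then have "uniformly_equicontinuous {f}" and "uniformly_equicontinuous F"
    by (simp_all add: uniformly_equicontinuous_singleton_iff)
  then show ?case
    using uniformly_equicontinuous_Un[of "{f}" F] by simp
qed

lemma uniformly_equicontinuous_comp:
  fixes F :: "('b::metric_space \<Rightarrow> 'c::metric_space) set" and G :: "('a::metric_space \<Rightarrow> 'b) set"
  assumes "uniformly_equicontinuous F" and "uniformly_equicontinuous G"
  shows "uniformly_equicontinuous {f \<circ> g |f g. f \<in> F \<and> g \<in> G}"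
proof (rule uniformly_equicontinuousI)
  fix e :: real assume "0 < e"
  obtain h where "0 < h" and h: "\<And>f x y. f \<in> F \<Longrightarrow> dist x y < h \<Longrightarrow> dist (f x) (f y) < e"
    using uniformly_equicontinuousE[OF assms(1) \<open>0 < e\<close>] by blast
  obtain d where "0 < d" and d: "\<And>g x y. g \<in> G \<Longrightarrow> dist x y < d \<Longrightarrow> dist (g x) (g y) < h"
    using uniformly_equicontinuousE[OF assms(2) \<open>0 < h\<close>] by blast
  have "dist (c x) (c y) < e" if "c \<in> {f \<circ> g |f g. f \<in> F \<and> g \<in> G}" "dist x y < d" for c x y
    using that h d by auto
  then show "\<exists>d>0. \<forall>c\<in>{f \<circ> g |f g. f \<in> F \<and> g \<in> G}. \<forall>x y. dist x y < d \<longrightarrow> dist (c x) (c y) < e"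
    using \<open>0 < d\<close> by (intro exI[of _ d]) simp
qed

lemma uniform_limit_uniformly_equicontinuous:
  fixes fs :: "nat \<Rightarrow> 'a::metric_space \<Rightarrow> 'b::metric_space"
  assumes "compact (UNIV :: 'a set)"
    and cont: "\<And>n. M \<le> n \<Longrightarrow> continuous_on UNIV (fs n)"
    and lim: "uniform_limit UNIV fs f sequentially"
  shows "uniformly_equicontinuous (fs ` {M..})"
proof (rule uniformly_equicontinuousI)
  fix e :: real assume "0 < e"
  have "continuous_on UNIV f"
    using cont by (intro uniform_limit_theorem[OF _ lim]) (auto simp: eventually_sequentially)
  then have "uniformly_continuous_on UNIV f"
    using \<open>compact UNIV\<close> by (rule compact_uniformly_continuous)
  then obtain d0 where "0 < d0" and d0: "\<And>x y. dist x y < d0 \<Longrightarrow> dist (f x) (f y) < e/3"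
    unfolding uniformly_continuous_on_def using \<open>0 < e\<close>
    by (metis UNIV_I dist_commute divide_pos_pos zero_less_numeral)
  obtain K where K: "\<And>n x. K \<le> n \<Longrightarrow> dist (fs n x) (f x) < e/3"
    using uniform_limitD[OF lim, of "e/3"] \<open>0 < e\<close> unfolding eventually_sequentially by auto
  have "uniformly_equicontinuous (fs ` {M..<K})"
    using cont \<open>compact UNIV\<close>
    by (intro uniformly_equicontinuous_finite) (auto intro: compact_uniformly_continuous)
  then obtain d1 where "0 < d1"
    and d1: "\<And>g x y. g \<in> fs ` {M..<K} \<Longrightarrow> dist x y < d1 \<Longrightarrow> dist (g x) (g y) < e"
    using uniformly_equicontinuousE \<open>0 < e\<close> by blast
  have "dist (fs n x) (fs n y) < e" if "M \<le> n" "dist x y < min d0 d1" for n x y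
  proof (cases "n < K")
    case True
    then show ?thesis using d1[of "fs n"] that by simp
  next
    case False
    then have "dist (fs n x) (f x) < e/3" "dist (f x) (f y) < e/3" "dist (f y) (fs n y) < e/3"
      using K[of n] d0 that by (auto simp: dist_commute)
    then show ?thesis by (rule dist_triangle_third)
  qed
  then show "\<exists>d>0. \<forall>g\<in>fs ` {M..}. \<forall>x y. dist x y < d \<longrightarrow> dist (g x) (g y) < e"
    using \<open>0 < d0\<close> \<open>0 < d1\<close> by (intro exI[of _ "min d0 d1"]) auto
qed

lemma comp_from_add: "comp_from f i (m + n) = comp_from f (i + m) n \<circ> comp_from f i m"
  by (induction n) (auto simp: add.assoc)

lemma comp_from_nth_iterate: "comp_from (nth_iterate N f) 1 j = comp_from f 1 (N * j)"
proof (induction j)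
  case (Suc j)
  have "comp_from f 1 (N * Suc j) = comp_from f (1 + N * j) N \<circ> comp_from f 1 (N * j)"
    by (metis comp_from_add mult_Suc_right add.commute)
  then show ?case using Suc by (simp add: nth_iterate_def add.commute)
qed simp

lemma uniformly_equicontinuous_comp_from:
  fixes fs :: "nat \<Rightarrow> 'a::metric_space \<Rightarrow> 'a"
  assumes "uniformly_equicontinuous (fs ` {M..})"
  shows "uniformly_equicontinuous {comp_from fs i k |i k. M \<le> i \<and> k \<le> K}"
proof (induction K)
  case 0
  have "{comp_from fs i k |i k. M \<le> i \<and> k \<le> 0} \<subseteq> {id}" by auto
  then show ?case using uniformly_equicontinuous_id by (rule uniformly_equicontinuous_subset)
next
  case (Suc K)
  let ?C = "{comp_from fs i k |i k. M \<le> i \<and> k \<le> K}"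
  have "{comp_from fs i k |i k. M \<le> i \<and> k \<le> Suc K} \<subseteq> {id} \<union> {f \<circ> g |f g. f \<in> fs ` {M..} \<and> g \<in> ?C}"
  proof
    fix c assume "c \<in> {comp_from fs i k |i k. M \<le> i \<and> k \<le> Suc K}"
    then obtain i k where "c = comp_from fs i k" "M \<le> i" "k \<le> Suc K" by blast
    then show "c \<in> {id} \<union> {f \<circ> g |f g. f \<in> fs ` {M..} \<and> g \<in> ?C}" by (cases k) force+
  qed
  moreover have "uniformly_equicontinuous {f \<circ> g |f g. f \<in> fs ` {M..} \<and> g \<in> ?C}"
    using assms Suc.IH by (rule uniformly_equicontinuous_comp)
  then have "uniformly_equicontinuous ({id} \<union> {f \<circ> g |f g. f \<in> fs ` {M..} \<and> g \<in> ?C})"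
    by (rule uniformly_equicontinuous_Un[OF uniformly_equicontinuous_id])
  ultimately show ?case by (rule uniformly_equicontinuous_subset)
qed

definition orbit_dist :: "(nat \<Rightarrow> 'a::metric_space \<Rightarrow> 'a) \<Rightarrow> 'a \<Rightarrow> 'a \<Rightarrow> nat \<Rightarrow> real" where
  "orbit_dist g x y i = dist (comp_from g 1 i x) (comp_from g 1 i y)"

lemma orbit_dist_nth_iterate: "orbit_dist (nth_iterate N g) x y = (\<lambda>j. orbit_dist g x y (N * j))"
  unfolding fun_eq_iff orbit_dist_def comp_from_nth_iterate by simp

lemma orbit_dist_stays_small:
  assumes "uniformly_equicontinuous {comp_from g i k |i k. 1 \<le> i \<and> k \<le> K}" and "0 < e"
  shows "\<exists>d>0. \<forall>i k. k \<le> K \<longrightarrow> orbit_dist g x y i < d \<longrightarrow> orbit_dist g x y (i + k) < e"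
proof -
  obtain d where "0 < d" and d: "\<And>c x y. c \<in> {comp_from g i k |i k. 1 \<le> i \<and> k \<le> K} \<Longrightarrow>
      dist x y < d \<Longrightarrow> dist (c x) (c y) < e"
    using uniformly_equicontinuousE[OF assms] by blast
  have "orbit_dist g x y (i + k) < e" if "k \<le> K" "orbit_dist g x y i < d" for i k
  proof -
    have "comp_from g (1 + i) k \<in> {comp_from g i k |i k. 1 \<le> i \<and> k \<le> K}"
      using that(1) by auto
    then have "dist (comp_from g (1 + i) k (comp_from g 1 i x))
        (comp_from g (1 + i) k (comp_from g 1 i y)) < e"
      using d that(2) unfolding orbit_dist_def by blast
    then show ?thesis
      unfolding orbit_dist_def comp_from_add by simp
  qed
  then show ?thesis using \<open>0 < d\<close> by blast
qed

section \<open>Proportions of close times\<close>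

lemma mult_card_subsample_le:
  fixes N n :: nat
  assumes "\<And>j r. P (N * j) \<Longrightarrow> r < N \<Longrightarrow> Q (N * j + r)"
  shows "N * card {j. j < n \<and> P (N * j)} \<le> card {i. i < N * n \<and> Q i}"
proof -
  let ?S = "{j. j < n \<and> P (N * j)}" and ?blocks = "\<lambda>(j, r). N * j + r"
  have inj: "inj_on ?blocks (?S \<times> {..<N})"
  proof (rule inj_onI, clarsimp)
    fix j r j' r' assume "r < N" "r' < N" and eq: "N * j + r = N * j' + r'"
    then have "(N * j + r) div N = (N * j' + r') div N" "(N * j + r) mod N = (N * j' + r') mod N"
      by simp_all
    then show "j = j' \<and> r = r'" using \<open>r < N\<close> \<open>r' < N\<close> by simp
  qed
  have sub: "?blocks ` (?S \<times> {..<N}) \<subseteq> {i. i < N * n \<and> Q i}"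
  proof clarsimp
    fix j r assume "j < n" "P (N * j)" "r < N"
    moreover have "N * Suc j \<le> N * n" using \<open>j < n\<close> by (intro mult_le_mono2) simp
    ultimately show "N * j + r < N * n \<and> Q (N * j + r)" using assms by simp
  qed
  have "N * card ?S = card (?blocks ` (?S \<times> {..<N}))"
    using card_image[OF inj] by (simp add: card_cartesian_product)
  also have "\<dots> \<le> card {i. i < N * n \<and> Q i}"
    using sub by (rule card_mono[rotated]) simp
  finally show ?thesis .
qed

lemma card_le_mult_card_subsample:
  fixes N n :: nat
  assumes "0 < N" and "\<And>i. Q i \<Longrightarrow> P (N * (i div N + 1))"
  shows "card {i. i < N * n \<and> Q i} \<le> N * card {j. j < n + 1 \<and> P (N * j)}"
proof -
  let ?T = "{j. j < n + 1 \<and> P (N * j)}"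
  have "{i. i < N * n \<and> Q i} \<subseteq> (\<lambda>(j, r). N * (j - 1) + r) ` (?T \<times> {..<N})"
  proof clarify
    fix i assume "i < N * n" "Q i"
    have "i div N < n" using less_mult_imp_div_less[of i n N] \<open>i < N * n\<close> by (simp add: mult.commute)
    then have "(i div N + 1, i mod N) \<in> ?T \<times> {..<N}"
      using assms \<open>Q i\<close> by simp
    moreover have "i = (\<lambda>(j, r). N * (j - 1) + r) (i div N + 1, i mod N)" by simp
    ultimately show "i \<in> (\<lambda>(j, r). N * (j - 1) + r) ` (?T \<times> {..<N})"
      by (rule rev_image_eqI)
  qed
  then have "card {i. i < N * n \<and> Q i} \<le> card ((\<lambda>(j, r). N * (j - 1) + r) ` (?T \<times> {..<N}))"
    by (rule card_mono[rotated]) simp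
  also have "\<dots> \<le> card (?T \<times> {..<N})"
    by (rule card_image_le) simp
  finally show ?thesis by (simp add: card_cartesian_product mult.commute)
qed

definition hit_ratio :: "(nat \<Rightarrow> real) \<Rightarrow> real \<Rightarrow> nat \<Rightarrow> real" where
  "hit_ratio a t n = real (card {i. i < n \<and> a i < t}) / real n"

lemma hit_ratio_nonneg: "0 \<le> hit_ratio a t n"
  by (simp add: hit_ratio_def)

lemma hit_ratio_subsample_le:
  fixes a :: "nat \<Rightarrow> real"
  assumes "0 < N" "N \<le> m" and close: "\<forall>i k. k \<le> N \<longrightarrow> a i < d \<longrightarrow> a (i + k) < e"
  shows "hit_ratio (\<lambda>j. a (N * j)) d (m div N) \<le> 2 * hit_ratio a e m"
proof -
  define n where "n = m div N"
  define s where "s = card {j. j < n \<and> a (N * j) < d}"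
  define c where "c = card {i. i < m \<and> a i < e}"
  have "1 \<le> n" using div_le_mono[OF \<open>N \<le> m\<close>, of N] \<open>0 < N\<close> by (simp add: n_def)
  have "N * n \<le> m" by (simp add: n_def)
  have "m = N * n + m mod N" "m mod N < N" "N \<le> N * n"
    using \<open>0 < N\<close> \<open>1 \<le> n\<close> by (simp_all add: n_def)
  then have "m \<le> 2 * (N * n)" by linarith
  have "N * s \<le> card {i. i < N * n \<and> a i < e}"
    unfolding s_def by (rule mult_card_subsample_le) (use close in auto)
  also have "\<dots> \<le> c"
    unfolding c_def by (rule card_mono) (use \<open>N * n \<le> m\<close> in auto)
  finally have "N * s \<le> c" .
  have "s * m \<le> s * (2 * (N * n))" using \<open>m \<le> 2 * (N * n)\<close> by (rule mult_le_mono2)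
  also have "\<dots> = 2 * n * (N * s)" by simp
  also have "\<dots> \<le> 2 * n * c" using \<open>N * s \<le> c\<close> by (rule mult_le_mono2)
  finally have "real s * real m \<le> 2 * real n * real c" by (metis of_nat_le_iff of_nat_mult of_nat_numeral)
  moreover have "0 < real n" "0 < real m" using \<open>1 \<le> n\<close> \<open>N \<le> m\<close> \<open>0 < N\<close> by simp_all
  ultimately have "real s / real n \<le> 2 * (real c / real m)" by (simp add: field_simps)
  then show ?thesis by (simp add: hit_ratio_def n_def s_def c_def)
qed

lemma hit_ratio_le_subsample:
  fixes a :: "nat \<Rightarrow> real"
  assumes "0 < N" "N \<le> m" and close: "\<forall>i k. k \<le> N \<longrightarrow> a i < d \<longrightarrow> a (i + k) < e"
  shows "hit_ratio a d m \<le> 3 * hit_ratio (\<lambda>j. a (N * j)) e (m div N + 2)"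
proof -
  define q where "q = m div N"
  define c where "c = card {i. i < m \<and> a i < d}"
  define s where "s = card {j. j < q + 2 \<and> a (N * j) < e}"
  have "1 \<le> q" using div_le_mono[OF \<open>N \<le> m\<close>, of N] \<open>0 < N\<close> by (simp add: q_def)
  have "N * q \<le> m" by (simp add: q_def)
  have "m = N * q + m mod N" "m mod N < N" using \<open>0 < N\<close> by (simp_all add: q_def)
  then have "m \<le> N * (q + 1)" by simp
  have next_multiple: "a (N * (i div N + 1)) < e" if "a i < d" for i
  proof -
    have "N * (i div N) + i mod N = i" "i mod N < N" "N * (i div N + 1) = N * (i div N) + N"
      using \<open>0 < N\<close> by simp_all
    then have "N * (i div N + 1) = i + (N - i mod N)" by linarith
    then show ?thesis using close that by simp
  qed
  have "c \<le> card {i. i < N * (q + 1) \<and> a i < d}"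
    unfolding c_def by (rule card_mono) (use \<open>m \<le> N * (q + 1)\<close> in auto)
  also have "\<dots> \<le> N * s"
    unfolding s_def
    using card_le_mult_card_subsample[where P = "\<lambda>i. a i < e" and Q = "\<lambda>i. a i < d" and n = "q + 1",
        OF \<open>0 < N\<close> next_multiple]
    by simp
  finally have "c \<le> N * s" .
  have "c * (q + 2) \<le> N * s * (q + 2)" using \<open>c \<le> N * s\<close> by (rule mult_le_mono1)
  also have "\<dots> \<le> N * s * (3 * q)" using \<open>1 \<le> q\<close> by (intro mult_le_mono2) simp
  also have "\<dots> = 3 * s * (N * q)" by (simp add: ac_simps)
  also have "\<dots> \<le> 3 * s * m" using \<open>N * q \<le> m\<close> by (rule mult_le_mono2)
  finally have "real c * real (q + 2) \<le> 3 * real s * real m" by (metis of_nat_le_iff of_nat_mult of_nat_numeral)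
  moreover have "0 < real m" using \<open>N \<le> m\<close> \<open>0 < N\<close> by simp
  ultimately have "real c / real m \<le> 3 * (real s / real (q + 2))" by (simp add: field_simps)
  then show ?thesis by (simp add: hit_ratio_def q_def s_def c_def)
qed

section \<open>Frequent smallness and largeness\<close>

lemma frequently_filterlim:
  assumes "filterlim \<psi> G F" and "\<exists>\<^sub>F x in F. P (\<psi> x)"
  shows "\<exists>\<^sub>F y in G. P y"
proof (rule ccontr)
  assume "\<not> (\<exists>\<^sub>F y in G. P y)"
  then have "\<forall>\<^sub>F y in G. \<not> P y" by (simp add: not_frequently)
  then have "\<forall>\<^sub>F x in F. \<not> P (\<psi> x)" using assms(1) by (rule eventually_compose_filterlim)
  then show False using assms(2) by (simp add: frequently_def)
qed

lemma frequently_small_transfer: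
  fixes u v :: "_ \<Rightarrow> real"
  assumes "filterlim \<psi> G F" and "0 < K" and "\<forall>\<^sub>F x in F. u (\<psi> x) \<le> K * v x"
    and "\<forall>e>0. \<exists>\<^sub>F x in F. v x < e"
  shows "\<forall>e>0. \<exists>\<^sub>F y in G. u y < e"
proof (intro allI impI)
  fix e :: real assume "0 < e"
  then have "\<exists>\<^sub>F x in F. v x < e / K" using assms(2,4) by simp
  moreover have "\<forall>\<^sub>F x in F. v x < e / K \<longrightarrow> u (\<psi> x) < e"
    using assms(3)
  proof eventually_elim
    case (elim x)
    then show ?case using \<open>0 < K\<close> by (auto simp: pos_less_divide_eq mult.commute)
  qed
  ultimately have "\<exists>\<^sub>F x in F. u (\<psi> x) < e" by (rule frequently_rev_mp)
  with assms(1) show "\<exists>\<^sub>F y in G. u y < e" by (rule frequently_filterlim)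
qed

lemma frequently_large_transfer:
  fixes u v :: "_ \<Rightarrow> real"
  assumes "filterlim \<psi> G F" and "0 < K" and "\<forall>\<^sub>F x in F. v x \<le> K * u (\<psi> x)"
    and "\<exists>e>0. \<exists>\<^sub>F x in F. e < v x"
  shows "\<exists>e>0. \<exists>\<^sub>F y in G. e < u y"
proof -
  obtain e where "0 < e" and "\<exists>\<^sub>F x in F. e < v x" using assms(4) by blast
  moreover have "\<forall>\<^sub>F x in F. e < v x \<longrightarrow> e / K < u (\<psi> x)"
    using assms(3)
  proof eventually_elim
    case (elim x)
    then show ?case using \<open>0 < K\<close> by (auto simp: pos_divide_less_eq mult.commute)
  qed
  ultimately have "\<exists>\<^sub>F x in F. e / K < u (\<psi> x)" by (auto elim: frequently_rev_mp)
  with assms(1) have "\<exists>\<^sub>F y in G. e / K < u y" by (rule frequently_filterlim)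
  then show ?thesis using \<open>0 < e\<close> \<open>0 < K\<close> by (intro exI[of _ "e / K"]) simp
qed

lemma liminf_ereal_eq_0_iff:
  fixes u :: "nat \<Rightarrow> real"
  assumes "\<And>n. 0 \<le> u n"
  shows "liminf (\<lambda>n. ereal (u n)) = 0 \<longleftrightarrow> (\<forall>e>0. \<exists>\<^sub>F n in sequentially. u n < e)"
proof
  assume lim: "liminf (\<lambda>n. ereal (u n)) = 0"
  show "\<forall>e>0. \<exists>\<^sub>F n in sequentially. u n < e"
  proof (intro allI impI)
    fix e :: real assume "0 < e"
    show "\<exists>\<^sub>F n in sequentially. u n < e"
    proof (rule ccontr)
      assume "\<not> (\<exists>\<^sub>F n in sequentially. u n < e)"
      then have "\<forall>\<^sub>F n in sequentially. ereal e \<le> ereal (u n)" by (simp add: not_frequently not_less)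
      then have "ereal e \<le> liminf (\<lambda>n. ereal (u n))" by (rule Liminf_bounded)
      then show False using lim \<open>0 < e\<close> by simp
    qed
  qed
next
  assume small: "\<forall>e>0. \<exists>\<^sub>F n in sequentially. u n < e"
  have "\<not> 0 < liminf (\<lambda>n. ereal (u n))"
  proof
    assume "0 < liminf (\<lambda>n. ereal (u n))"
    then obtain c where "0 < ereal c" and "ereal c < liminf (\<lambda>n. ereal (u n))"
      using ereal_dense2 by blast
    from this(2) have "\<forall>\<^sub>F n in sequentially. ereal c < ereal (u n)" by (rule less_LiminfD)
    then have "\<forall>\<^sub>F n in sequentially. \<not> u n < c" by (auto elim: eventually_mono)
    moreover have "\<exists>\<^sub>F n in sequentially. u n < c" using small \<open>0 < ereal c\<close> by simp
    ultimately show False by (simp add: frequently_def)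
  qed
  moreover have "0 \<le> liminf (\<lambda>n. ereal (u n))"
    by (rule Liminf_bounded) (simp add: assms)
  ultimately show "liminf (\<lambda>n. ereal (u n)) = 0" by simp
qed

lemma limsup_ereal_pos_iff:
  fixes u :: "nat \<Rightarrow> real"
  shows "0 < limsup (\<lambda>n. ereal (u n)) \<longleftrightarrow> (\<exists>e>0. \<exists>\<^sub>F n in sequentially. e < u n)"
proof
  assume "0 < limsup (\<lambda>n. ereal (u n))"
  then obtain c where "0 < ereal c" "ereal c < limsup (\<lambda>n. ereal (u n))"
    using ereal_dense2 by blast
  have "\<exists>\<^sub>F n in sequentially. c < u n"
  proof (rule ccontr)
    assume "\<not> (\<exists>\<^sub>F n in sequentially. c < u n)"
    then have "\<forall>\<^sub>F n in sequentially. ereal (u n) \<le> ereal c" by (simp add: not_frequently not_less)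
    then have "limsup (\<lambda>n. ereal (u n)) \<le> ereal c" by (rule Limsup_bounded)
    then show False using \<open>ereal c < limsup _\<close> by simp
  qed
  then show "\<exists>e>0. \<exists>\<^sub>F n in sequentially. e < u n" using \<open>0 < ereal c\<close> by auto
next
  assume "\<exists>e>0. \<exists>\<^sub>F n in sequentially. e < u n"
  then obtain e where "0 < e" and large: "\<exists>\<^sub>F n in sequentially. e < u n" by blast
  show "0 < limsup (\<lambda>n. ereal (u n))"
  proof (rule ccontr)
    assume "\<not> 0 < limsup (\<lambda>n. ereal (u n))"
    then have "\<forall>\<^sub>F n in sequentially. ereal (u n) < ereal e"
      using \<open>0 < e\<close> by (intro Limsup_lessD) (simp add: not_less order_le_less_trans)
    then have "\<forall>\<^sub>F n in sequentially. \<not> e < u n" by (auto elim: eventually_mono)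
    then show False using large by (simp add: frequently_def)
  qed
qed

section \<open>DC2' pairs of a system and of its iterate\<close>

definition DC2'_pair :: "(nat \<Rightarrow> real) \<Rightarrow> bool" where
  "DC2'_pair a \<longleftrightarrow>
     (\<exists>\<epsilon>>0. liminf (\<lambda>n. ereal (hit_ratio a \<epsilon> n)) = 0) \<and>
     (\<forall>t>0. 0 < limsup (\<lambda>n. ereal (hit_ratio a t n)))"

lemma DC2'_iff_DC2'_pair:
  "DC2' g \<longleftrightarrow> (\<exists>S. uncountable S \<and> (\<forall>x\<in>S. \<forall>y\<in>S. x \<noteq> y \<longrightarrow> DC2'_pair (orbit_dist g x y)))"
proof -
  have ratio: "real (close_count g x y t n) / real n = hit_ratio (orbit_dist g x y) t n" for x y t n
    by (simp add: close_count_def hit_ratio_def orbit_dist_def)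
  show ?thesis by (simp only: DC2'_def DC2'_pair_def Phi_lower_def Phi_upper_def ratio)
qed

lemma liminf_hit_ratio_subsample_iff:
  fixes a :: "nat \<Rightarrow> real"
  assumes "0 < N" and close: "\<And>e. 0 < e \<Longrightarrow> \<exists>d>0. \<forall>i k. k \<le> N \<longrightarrow> a i < d \<longrightarrow> a (i + k) < e"
  shows "(\<exists>\<epsilon>>0. liminf (\<lambda>n. ereal (hit_ratio (\<lambda>j. a (N * j)) \<epsilon> n)) = 0) \<longleftrightarrow>
         (\<exists>\<epsilon>>0. liminf (\<lambda>n. ereal (hit_ratio a \<epsilon> n)) = 0)"
  unfolding liminf_ereal_eq_0_iff[OF hit_ratio_nonneg]
proof
  assume "\<exists>\<epsilon>>0. \<forall>e>0. \<exists>\<^sub>F n in sequentially. hit_ratio (\<lambda>j. a (N * j)) \<epsilon> n < e"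
  then obtain \<epsilon> where "0 < \<epsilon>" and sparse: "\<forall>e>0. \<exists>\<^sub>F n in sequentially. hit_ratio (\<lambda>j. a (N * j)) \<epsilon> n < e"
    by blast
  obtain d where "0 < d" and d: "\<forall>i k. k \<le> N \<longrightarrow> a i < d \<longrightarrow> a (i + k) < \<epsilon>"
    using close[OF \<open>0 < \<epsilon>\<close>] by blast
  have "\<forall>\<^sub>F n in sequentially. hit_ratio a d (N * (n - 2)) \<le> 3 * hit_ratio (\<lambda>j. a (N * j)) \<epsilon> n"
  proof (rule eventually_sequentiallyI[of 3])
    fix n :: nat assume "3 \<le> n"
    then have "N \<le> N * (n - 2)" and "N * (n - 2) div N + 2 = n" using \<open>0 < N\<close> by simp_all
    then show "hit_ratio a d (N * (n - 2)) \<le> 3 * hit_ratio (\<lambda>j. a (N * j)) \<epsilon> n"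
      using hit_ratio_le_subsample[OF \<open>0 < N\<close> \<open>N \<le> N * (n - 2)\<close> d] by simp
  qed
  moreover have "filterlim (\<lambda>n. N * (n - 2)) sequentially sequentially"
    by (rule filterlim_at_top_mono[OF filterlim_minus_const_nat_at_top[of 2]]) (use \<open>0 < N\<close> in auto)
  ultimately have "\<forall>e>0. \<exists>\<^sub>F m in sequentially. hit_ratio a d m < e"
    using frequently_small_transfer[where K = 3] sparse by simp
  then show "\<exists>\<epsilon>>0. \<forall>e>0. \<exists>\<^sub>F m in sequentially. hit_ratio a \<epsilon> m < e"
    using \<open>0 < d\<close> by blast
next
  assume "\<exists>\<epsilon>>0. \<forall>e>0. \<exists>\<^sub>F m in sequentially. hit_ratio a \<epsilon> m < e"
  then obtain \<epsilon> where "0 < \<epsilon>" and sparse: "\<forall>e>0. \<exists>\<^sub>F m in sequentially. hit_ratio a \<epsilon> m < e"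
    by blast
  obtain d where "0 < d" and d: "\<forall>i k. k \<le> N \<longrightarrow> a i < d \<longrightarrow> a (i + k) < \<epsilon>"
    using close[OF \<open>0 < \<epsilon>\<close>] by blast
  have "\<forall>\<^sub>F m in sequentially. hit_ratio (\<lambda>j. a (N * j)) d (m div N) \<le> 2 * hit_ratio a \<epsilon> m"
    using hit_ratio_subsample_le[OF \<open>0 < N\<close> _ d] by (rule eventually_sequentiallyI)
  moreover have "filterlim (\<lambda>m. m div N) sequentially sequentially"
    using \<open>0 < N\<close> by (rule filterlim_at_top_div_const_nat)
  ultimately have "\<forall>e>0. \<exists>\<^sub>F n in sequentially. hit_ratio (\<lambda>j. a (N * j)) d n < e"
    using frequently_small_transfer[where K = 2] sparse by simp
  then show "\<exists>\<epsilon>>0. \<forall>e>0. \<exists>\<^sub>F n in sequentially. hit_ratio (\<lambda>j. a (N * j)) \<epsilon> n < e"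
    using \<open>0 < d\<close> by blast
qed

lemma limsup_hit_ratio_subsample_iff:
  fixes a :: "nat \<Rightarrow> real"
  assumes "0 < N" and close: "\<And>e. 0 < e \<Longrightarrow> \<exists>d>0. \<forall>i k. k \<le> N \<longrightarrow> a i < d \<longrightarrow> a (i + k) < e"
  shows "(\<forall>t>0. 0 < limsup (\<lambda>n. ereal (hit_ratio (\<lambda>j. a (N * j)) t n))) \<longleftrightarrow>
         (\<forall>t>0. 0 < limsup (\<lambda>n. ereal (hit_ratio a t n)))"
  unfolding limsup_ereal_pos_iff
proof (intro iffI allI impI)
  fix t :: real
  assume dense: "\<forall>t>0. \<exists>e>0. \<exists>\<^sub>F n in sequentially. e < hit_ratio (\<lambda>j. a (N * j)) t n" and "0 < t"
  obtain d where "0 < d" and d: "\<forall>i k. k \<le> N \<longrightarrow> a i < d \<longrightarrow> a (i + k) < t"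
    using close[OF \<open>0 < t\<close>] by blast
  have "\<forall>\<^sub>F n in sequentially. hit_ratio (\<lambda>j. a (N * j)) d n \<le> 2 * hit_ratio a t (N * n)"
  proof (rule eventually_sequentiallyI[of 1])
    fix n :: nat assume "1 \<le> n"
    then show "hit_ratio (\<lambda>j. a (N * j)) d n \<le> 2 * hit_ratio a t (N * n)"
      using hit_ratio_subsample_le[OF \<open>0 < N\<close> _ d, of "N * n"] \<open>0 < N\<close> by simp
  qed
  moreover have "filterlim (\<lambda>n. N * n) sequentially sequentially"
    using \<open>0 < N\<close> by (rule mult_nat_left_at_top)
  moreover have "\<exists>e>0. \<exists>\<^sub>F n in sequentially. e < hit_ratio (\<lambda>j. a (N * j)) d n"
    using dense \<open>0 < d\<close> by blast
  ultimately show "\<exists>e>0. \<exists>\<^sub>F m in sequentially. e < hit_ratio a t m"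
    using frequently_large_transfer[where K = 2] by simp
next
  fix t :: real
  assume dense: "\<forall>t>0. \<exists>e>0. \<exists>\<^sub>F m in sequentially. e < hit_ratio a t m" and "0 < t"
  obtain d where "0 < d" and d: "\<forall>i k. k \<le> N \<longrightarrow> a i < d \<longrightarrow> a (i + k) < t"
    using close[OF \<open>0 < t\<close>] by blast
  have "\<forall>\<^sub>F m in sequentially. hit_ratio a d m \<le> 3 * hit_ratio (\<lambda>j. a (N * j)) t (m div N + 2)"
    using hit_ratio_le_subsample[OF \<open>0 < N\<close> _ d] by (rule eventually_sequentiallyI)
  moreover have "filterlim (\<lambda>m. m div N + 2) sequentially sequentially"
    by (rule filterlim_at_top_mono[OF filterlim_at_top_div_const_nat[OF \<open>0 < N\<close>]]) simp
  moreover have "\<exists>e>0. \<exists>\<^sub>F m in sequentially. e < hit_ratio a d m"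
    using dense \<open>0 < d\<close> by blast
  ultimately show "\<exists>e>0. \<exists>\<^sub>F n in sequentially. e < hit_ratio (\<lambda>j. a (N * j)) t n"
    using frequently_large_transfer[where K = 3] by simp
qed

lemma DC2'_pair_subsample_iff:
  fixes a :: "nat \<Rightarrow> real"
  assumes "0 < N" and "\<And>e. 0 < e \<Longrightarrow> \<exists>d>0. \<forall>i k. k \<le> N \<longrightarrow> a i < d \<longrightarrow> a (i + k) < e"
  shows "DC2'_pair (\<lambda>j. a (N * j)) \<longleftrightarrow> DC2'_pair a"
  unfolding DC2'_pair_def
  by (intro conj_cong liminf_hit_ratio_subsample_iff[OF assms] limsup_hit_ratio_subsample_iff[OF assms])

theorem mainTheorem2:
  fixes fs :: "nat \<Rightarrow> 'a::metric_space \<Rightarrow> 'a" and f :: "'a \<Rightarrow> 'a" and N :: nat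
  assumes "compact (UNIV :: 'a set)"
    and "\<And>n. n \<ge> 1 \<Longrightarrow> continuous_on UNIV (fs n)"
    and "uniform_limit UNIV fs f sequentially"
    and "N \<ge> 1"
  shows "DC2' fs \<longleftrightarrow> DC2' (nth_iterate N fs)"
proof -
  have "uniformly_equicontinuous (fs ` {1..})"
    using assms(1-3) by (rule uniform_limit_uniformly_equicontinuous)
  then have equi: "uniformly_equicontinuous {comp_from fs i k |i k. 1 \<le> i \<and> k \<le> N}"
    by (rule uniformly_equicontinuous_comp_from)
  have "DC2'_pair (orbit_dist (nth_iterate N fs) x y) \<longleftrightarrow> DC2'_pair (orbit_dist fs x y)" for x y
    unfolding orbit_dist_nth_iterate
    using \<open>N \<ge> 1\<close> orbit_dist_stays_small[OF equi] by (intro DC2'_pair_subsample_iff) auto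
  then show ?thesis unfolding DC2'_iff_DC2'_pair by simp
qed

end
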